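(* Let $K\ge 1$ and let $\lambda_1,\dots,\lambda_K>0$. Let $\eta_1,\dots,\eta_K$ be independent random variables with $\eta_i\sim\mathrm{Ga}(\lambda_i,1)$, i.e. with density $\eta^{\lambda_i-1}e^{-\eta}/\Gamma(\lambda_i)$ on $(0,\infty)$. Then: (i) if $\Psi=\prod_{i=1}^K \eta_i$, the sparsity shape parameter of $\Psi$ equals $\min\{\lambda_1,\dots,\lambda_K\}$; (ii) if $\Psi=\sum_{i=1}^K \eta_i$, the sparsity shape parameter of $\Psi$ equals $\sum_{i=1}^K \lambda_i$.
   Context: For a positive random variable $\Psi$ with density $p$ on $(0,\infty)$, its sparsity shape parameter is defined as $$\sup\left\{ z \;\middle|\; \frac{p(\Psi)}{\Psi^{z-1}}\to \kappa \text{ as } \Psi\to 0 \text{ for some finite } \kappa\right\}.$$ *)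

theory Defs
  imports "HOL-Probability.Probability"
begin

definition gamma_density :: "real \<Rightarrow> real \<Rightarrow> real" where
  "gamma_density l x = (if 0 < x then x powr (l - 1) * exp (- x) / Gamma l else 0)"

definition sparsity_shape :: "(real \<Rightarrow> real) \<Rightarrow> real" where
  "sparsity_shape p =
     Sup {z. \<exists>\<kappa>::real. ((\<lambda>x. p x / x powr (z - 1)) \<longlongrightarrow> \<kappa>) (at_right 0)}"

end

theory Submission
  imports Defs
begin

text \<open>
  The sparsity shape of a density \<open>p\<close> is \<open>m\<close> as soon as \<open>p x \<le> D x^(s - 1)\<close> on \<open>(0, \<infinity>)\<close> for
  every \<open>s < m\<close> and \<open>P(\<Psi> \<le> x) \<ge> c x^m\<close> for small \<open>x\<close>: the first bound makes \<open>p x / x^(z - 1)\<close>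
  tend to \<open>0\<close> for \<open>z < m\<close>, the second rules out a finite limit for \<open>z > m\<close>.

  A sum of independent Gamma variables is Gamma distributed with shape \<open>\<Sum>\<lambda>\<^sub>i\<close>, and a
  Gamma(\<open>\<lambda>\<close>) density satisfies both bounds with \<open>m = \<lambda>\<close>.

  For the product let \<open>\<lambda>\<^sub>j\<close> be the smallest shape. The event that \<open>\<eta>\<^sub>j \<le> x\<close> while all other
  factors lie in \<open>(0, 1]\<close> has probability at least \<open>c x^\<lambda>\<^sub>j\<close>. Conversely, for \<open>s < \<lambda>\<^sub>j\<close> the
  Gamma(\<open>\<lambda>\<^sub>j\<close>) density is at most \<open>C y^(s - 1)\<close>, so given the product \<open>r\<close> of the other factors
  the product has density at most \<open>C r^(-s) x^(s - 1)\<close>; since \<open>E r^(-s) = \<Prod> \<Gamma>(\<lambda>\<^sub>i - s) / \<Gamma>(\<lambda>\<^sub>i)\<close>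
  is finite, this bounds the interval masses of \<open>\<Psi>\<close>, and continuity of \<open>p\<close> turns that into
  the pointwise bound \<open>p x \<le> D x^(s - 1)\<close>.
\<close>

section \<open>Gamma densities and Gamma measures\<close>

definition gamma_measure :: "real \<Rightarrow> real measure" where
  "gamma_measure l = density lborel (\<lambda>x. ennreal (gamma_density l x))"

lemma gamma_density_nonneg: "0 < l \<Longrightarrow> 0 \<le> gamma_density l x"
  using Gamma_real_pos[of l] by (auto simp: gamma_density_def)

lemma borel_measurable_gamma_density [measurable]: "gamma_density l \<in> borel_measurable borel"
  unfolding gamma_density_def by measurable

lemma continuous_on_gamma_density: "continuous_on {0<..} (gamma_density l)"
proof -
  have "continuous_on {0<..} (\<lambda>x::real. x powr (l - 1) * exp (- x) * (1 / Gamma l))"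
    by (intro continuous_intros) auto
  then show ?thesis
    by (rule continuous_on_cong[THEN iffD1, rotated 2]) (auto simp: gamma_density_def)
qed

lemma sets_gamma_measure [measurable_cong, simp]: "sets (gamma_measure l) = sets borel"
  by (simp add: gamma_measure_def)

lemma nn_integral_gamma_measure:
  "f \<in> borel_measurable borel \<Longrightarrow>
    (\<integral>\<^sup>+x. f x \<partial>gamma_measure l) = (\<integral>\<^sup>+x. ennreal (gamma_density l x) * f x \<partial>lborel)"
  by (simp add: gamma_measure_def nn_integral_density)

lemma sigma_finite_gamma_measure: "sigma_finite_measure (gamma_measure l)"
  unfolding gamma_measure_def
  by (subst sigma_finite_measure.sigma_finite_iff_density_finite[OF sigma_finite_lborel]) auto

lemma nn_integral_gamma_measure_powr:
  assumes l: "0 < l" and s: "s < l"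
  shows "(\<integral>\<^sup>+y. ennreal (\<bar>y\<bar> powr (- s)) \<partial>gamma_measure l) = ennreal (Gamma (l - s) / Gamma l)"
proof -
  have G: "Gamma l > 0" using l by (rule Gamma_real_pos)
  have "(\<integral>\<^sup>+y. ennreal (\<bar>y\<bar> powr (- s)) \<partial>gamma_measure l)
     = (\<integral>\<^sup>+y. ennreal (indicator {0..} y * y powr (l - s - 1) / exp y) * ennreal (1 / Gamma l) \<partial>lborel)"
  proof (subst nn_integral_gamma_measure, measurable, intro nn_integral_cong)
    fix y :: real
    show "ennreal (gamma_density l y) * ennreal (\<bar>y\<bar> powr (- s)) =
       ennreal (indicator {0..} y * y powr (l - s - 1) / exp y) * ennreal (1 / Gamma l)"
    proof (cases "y > 0")
      case True
      have "y powr (l - 1) * y powr (- s) = y powr (l - s - 1)"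
        by (simp add: powr_add[symmetric] algebra_simps)
      then show ?thesis using True G
        by (simp add: gamma_density_def ennreal_mult'' [symmetric] exp_minus field_simps)
    next
      case False
      then show ?thesis by (cases "y = 0") (auto simp: gamma_density_def indicator_def)
    qed
  qed
  also have "\<dots> = ennreal (Gamma (l - s)) * ennreal (1 / Gamma l)"
    using s by (simp add: nn_integral_multc Gamma_conv_nn_integral_real)
  also have "\<dots> = ennreal (Gamma (l - s) / Gamma l)"
    using G s by (simp add: ennreal_mult'' [symmetric] less_imp_le)
  finally show ?thesis .
qed

lemma powr_le_powr_self_mult_exp:
  fixes c y :: real assumes c: "0 < c" and y: "0 \<le> y"
  shows "y powr c \<le> c powr c * exp y"
proof -
  have "y / c \<le> exp (y / c)"
    using exp_ge_add_one_self[of "y / c"] by linarith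
  then have "(y / c) powr c \<le> exp (y / c) powr c"
    using c y by (intro powr_mono2) auto
  also have "exp (y / c) powr c = exp y" using c by (simp add: powr_def)
  finally show ?thesis using c y by (simp add: powr_divide field_simps)
qed

lemma gamma_density_le_powr:
  assumes l: "0 < l" and s: "s < l" and y: "0 < y"
  shows "gamma_density l y \<le> (l - s) powr (l - s) / Gamma l * y powr (s - 1)"
proof -
  have G: "Gamma l > 0" using l by (rule Gamma_real_pos)
  have "gamma_density l y = (y powr (l - s) * exp (- y)) * y powr (s - 1) / Gamma l"
    using y by (simp add: gamma_density_def powr_add[symmetric])
  also have "\<dots> \<le> ((l - s) powr (l - s) * exp y * exp (- y)) * y powr (s - 1) / Gamma l"
    using powr_le_powr_self_mult_exp[of "l - s" y] s y G
    by (intro divide_right_mono mult_right_mono) auto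
  also have "\<dots> = (l - s) powr (l - s) / Gamma l * y powr (s - 1)"
    by (simp add: exp_minus field_simps)
  finally show ?thesis .
qed

lemma emeasure_gamma_measure_Ioc_ge:
  assumes l: "0 < l" and x: "0 < x" "x \<le> 1"
  shows "ennreal (exp (- 1) / Gamma l / l * x powr l) \<le> emeasure (gamma_measure l) {0<..x}"
proof -
  have G: "Gamma l > 0" using l by (rule Gamma_real_pos)
  have "((\<lambda>t. exp (- 1) / Gamma l * t powr (l - 1)) has_integral
      (exp (- 1) / Gamma l * (x powr l / l))) {0..x}"
    using has_integral_powr_from_0[of "l - 1" x] l x by (intro has_integral_mult_right) auto
  from nn_integral_has_integral_lebesgue'[OF _ this]
  have "ennreal (exp (- 1) / Gamma l / l * x powr l) =
     (\<integral>\<^sup>+t. ennreal (exp (- 1) / Gamma l * t powr (l - 1)) * indicator {0..x} t \<partial>lborel)"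
    using G by simp
  also have "\<dots> \<le> (\<integral>\<^sup>+t. ennreal (gamma_density l t) * indicator {0<..x} t \<partial>lborel)"
  proof (intro nn_integral_mono)
    fix t :: real
    show "ennreal (exp (- 1) / Gamma l * t powr (l - 1)) * indicator {0..x} t \<le>
          ennreal (gamma_density l t) * indicator {0<..x} t"
    proof (cases "0 < t \<and> t \<le> x")
      case True
      have "exp (- 1) \<le> exp (- t)" using True x by simp
      then have "exp (- 1) / Gamma l * t powr (l - 1) \<le> gamma_density l t"
        using True G by (auto simp: gamma_density_def field_simps intro!: mult_left_mono)
      then show ?thesis using True by (auto simp: indicator_def intro: ennreal_leI)
    next
      case False
      then show ?thesis by (cases "t = 0") (auto simp: indicator_def)
    qed
  qed
  also have "\<dots> = emeasure (gamma_measure l) {0<..x}"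
    by (simp add: gamma_measure_def emeasure_density)
  finally show ?thesis .
qed

lemma nn_integral_gamma_measure_indicator_scaled_le:
  assumes l: "0 < l" and s: "s < l" and A: "A \<subseteq> {0<..}" and [measurable]: "A \<in> sets borel"
  shows "(\<integral>\<^sup>+t. indicator A (t * r) \<partial>gamma_measure l)
     \<le> ennreal ((l - s) powr (l - s) / Gamma l) * ennreal (\<bar>r\<bar> powr (- s))
        * (\<integral>\<^sup>+u. ennreal (u powr (s - 1)) * indicator A u \<partial>lborel)"
proof (cases "0 < r")
  case False
  have "indicator A (t * r) = (0 :: ennreal)" if "0 < t" for t
    using A False that mult_pos_neg[of t r] by (force simp: indicator_def not_less le_less)
  moreover have "AE t in gamma_measure l. 0 < t"
    unfolding gamma_measure_def
    by (subst AE_density) (auto simp: gamma_density_def)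
  ultimately have "(\<integral>\<^sup>+t. indicator A (t * r) \<partial>gamma_measure l) = 0"
    by (subst nn_integral_0_iff_AE) (auto elim!: eventually_mono)
  then show ?thesis by simp
next
  case True
  define C where "C = (l - s) powr (l - s) / Gamma l"
  have C0: "0 \<le> C" using Gamma_real_pos[OF l] by (simp add: C_def)
  have "(\<integral>\<^sup>+t. indicator A (t * r) \<partial>gamma_measure l)
     = (\<integral>\<^sup>+t. ennreal (gamma_density l t) * indicator A (t * r) \<partial>lborel)"
    by (rule nn_integral_gamma_measure) measurable
  also have "\<dots> = ennreal \<bar>1/r\<bar> * (\<integral>\<^sup>+u. ennreal (gamma_density l (0 + (1/r) * u))
      * indicator A ((0 + (1/r) * u) * r) \<partial>lborel)"
    by (rule nn_integral_real_affine) (use True in auto)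
  also have "\<dots> = (\<integral>\<^sup>+u. ennreal (1/r) * (ennreal (gamma_density l (u / r)) * indicator A u) \<partial>lborel)"
    using True by (simp add: nn_integral_cmult)
  also have "\<dots> \<le> (\<integral>\<^sup>+u. ennreal (C * r powr (- s)) * (ennreal (u powr (s - 1)) * indicator A u) \<partial>lborel)"
  proof (intro nn_integral_mono)
    fix u :: real
    show "ennreal (1/r) * (ennreal (gamma_density l (u / r)) * indicator A u)
        \<le> ennreal (C * r powr (- s)) * (ennreal (u powr (s - 1)) * indicator A u)"
    proof (cases "u \<in> A")
      case uA: True
      then have u: "0 < u" using A by auto
      have "1 / r * gamma_density l (u / r) \<le> 1 / r * (C * (u / r) powr (s - 1))"
        using gamma_density_le_powr[OF l s, of "u / r"] u True
        by (intro mult_left_mono) (auto simp: C_def)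
      also have "\<dots> = C * r powr (- s) * u powr (s - 1)"
        using True u by (simp add: powr_divide powr_minus powr_diff field_simps)
      finally have le: "1 / r * gamma_density l (u / r) \<le> C * r powr (- s) * u powr (s - 1)" .
      then show ?thesis
        using uA True C0 gamma_density_nonneg[OF l]
        by (simp add: ennreal_mult'' [symmetric] mult.assoc[symmetric] ennreal_leI)
    qed simp
  qed
  also have "\<dots> = ennreal (C * r powr (- s))
      * (\<integral>\<^sup>+u. ennreal (u powr (s - 1)) * indicator A u \<partial>lborel)"
    by (rule nn_integral_cmult) measurable
  also have "ennreal (C * r powr (- s)) = ennreal C * ennreal (\<bar>r\<bar> powr (- s))"
    using C0 True by (simp add: ennreal_mult)
  finally show ?thesis by (simp only: C_def)
qed

section \<open>The sparsity shape parameter\<close>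

lemma tendsto_powr_at_right_0: "0 < a \<Longrightarrow> ((\<lambda>x::real. x powr a) \<longlongrightarrow> 0) (at_right 0)"
  by (rule tendsto_zero_powrI)
     (auto intro: eventually_mono[OF eventually_at_right_less])

lemma tendsto_ratio_powr_zero:
  fixes p :: "real \<Rightarrow> real"
  assumes nonneg: "\<And>x. 0 < x \<Longrightarrow> 0 \<le> p x"
    and bound: "\<And>x. 0 < x \<Longrightarrow> p x \<le> D * x powr (s - 1)" and zs: "z < s"
  shows "((\<lambda>x. p x / x powr (z - 1)) \<longlongrightarrow> 0) (at_right 0)"
proof (rule tendsto_sandwich)
  show "\<forall>\<^sub>F x in at_right 0. 0 \<le> p x / x powr (z - 1)"
    by (rule eventually_mono[OF eventually_at_right_less]) (simp add: nonneg)
  show "\<forall>\<^sub>F x in at_right 0. p x / x powr (z - 1) \<le> D * x powr (s - z)"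
  proof (rule eventually_mono[OF eventually_at_right_less])
    fix x :: real assume x: "0 < x"
    have "p x / x powr (z - 1) \<le> D * x powr (s - 1) / x powr (z - 1)"
      using bound x by (intro divide_right_mono) auto
    also have "\<dots> = D * (x powr (s - 1) / x powr (z - 1))"
      by simp
    also have "\<dots> = D * x powr (s - z)"
      by (simp add: powr_diff[symmetric])
    finally show "p x / x powr (z - 1) \<le> D * x powr (s - z)" .
  qed
  show "((\<lambda>x. D * x powr (s - z)) \<longlongrightarrow> 0) (at_right 0)"
    using tendsto_mult_right_zero[OF tendsto_powr_at_right_0, of "s - z" D] zs by simp
qed simp

lemma not_tendsto_ratio_powr_if_mass_ge:
  fixes p :: "real \<Rightarrow> real"
  assumes c: "0 < c" and \<delta>: "0 < \<delta>" and m: "0 < m" and mz: "m < z"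
    and mass: "\<And>x. 0 < x \<Longrightarrow> x < \<delta> \<Longrightarrow>
      ennreal (c * x powr m) \<le> (\<integral>\<^sup>+t. ennreal (p t) * indicator {0<..x} t \<partial>lborel)"
  shows "\<not> ((\<lambda>x. p x / x powr (z - 1)) \<longlongrightarrow> \<kappa>) (at_right 0)"
proof
  assume "((\<lambda>x. p x / x powr (z - 1)) \<longlongrightarrow> \<kappa>) (at_right 0)"
  define B where "B = max 1 (\<kappa> + 1)"
  have "\<forall>\<^sub>F x in at_right 0. p x / x powr (z - 1) < B"
    by (rule order_tendstoD) (use \<open>(_ \<longlongrightarrow> \<kappa>) _\<close> in \<open>auto simp: B_def\<close>)
  then obtain d where d: "0 < d" and "\<And>x. 0 < x \<Longrightarrow> x < d \<Longrightarrow> p x / x powr (z - 1) < B"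
    unfolding eventually_at_right[OF zero_less_one] by auto
  then have pB: "\<And>x. 0 < x \<Longrightarrow> x < d \<Longrightarrow> p x \<le> B * x powr (z - 1)"
    by (simp add: divide_less_eq less_imp_le)
  have B: "0 < B" by (simp add: B_def)
  \<comment> \<open>near \<open>0\<close>, the mass \<open>c x\<^sup>m\<close> would be bounded by \<open>B x\<^sup>z / z\<close>, which is of smaller order\<close>
  have small: "c \<le> B / z * x powr (z - m)" if x: "0 < x" "x < d" "x < \<delta>" for x
  proof -
    have int: "((\<lambda>t. B * t powr (z - 1)) has_integral (B * (x powr z / z))) {0..x}"
      using has_integral_powr_from_0[of "z - 1" x] mz m x by (intro has_integral_mult_right) auto
    have "ennreal (c * x powr m) \<le> (\<integral>\<^sup>+t. ennreal (p t) * indicator {0<..x} t \<partial>lborel)"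
      using mass x by auto
    also have "\<dots> \<le> (\<integral>\<^sup>+t. ennreal (B * t powr (z - 1)) * indicator {0..x} t \<partial>lborel)"
      using pB x by (intro nn_integral_mono) (auto simp: indicator_def intro: ennreal_leI)
    also have "\<dots> = ennreal (B * (x powr z / z))"
      using nn_integral_has_integral_lebesgue'[OF _ int] B by simp
    finally have "c * x powr m \<le> B * (x powr z / z)"
      using B mz m x by (subst (asm) ennreal_le_iff) auto
    then show ?thesis
      using x mz m by (simp add: powr_diff field_simps)
  qed
  have "((\<lambda>x. B / z * x powr (z - m)) \<longlongrightarrow> 0) (at_right 0)"
    using tendsto_mult_right_zero[OF tendsto_powr_at_right_0, of "z - m" "B / z"] mz by simp
  then have "\<forall>\<^sub>F x in at_right 0. B / z * x powr (z - m) < c"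
    using c by (rule order_tendstoD)
  moreover have "\<forall>\<^sub>F x in at_right 0. 0 < x \<and> x < d \<and> x < \<delta>"
    unfolding eventually_at_right[OF zero_less_one] using d \<delta> by (intro exI[of _ "min d \<delta>"]) auto
  ultimately have "\<forall>\<^sub>F x in at_right (0::real). False"
    by eventually_elim (use small in force)
  then show False by simp
qed

lemma sparsity_shape_eqI:
  fixes p :: "real \<Rightarrow> real"
  assumes m: "0 < m"
    and nonneg: "\<And>x. 0 < x \<Longrightarrow> 0 \<le> p x"
    and upper: "\<And>s. s < m \<Longrightarrow> \<exists>D. \<forall>x>0. p x \<le> D * x powr (s - 1)"
    and lower: "\<exists>c>0. \<exists>\<delta>>0. \<forall>x. 0 < x \<longrightarrow> x < \<delta> \<longrightarrow>
       ennreal (c * x powr m) \<le> (\<integral>\<^sup>+t. ennreal (p t) * indicator {0<..x} t \<partial>lborel)"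
  shows "sparsity_shape p = m"
proof -
  define S where "S = {z. \<exists>\<kappa>::real. ((\<lambda>x. p x / x powr (z - 1)) \<longlongrightarrow> \<kappa>) (at_right 0)}"
  have below: "z \<in> S" if "z < m" for z
  proof -
    have "(z + m) / 2 < m" using that by simp
    then obtain D where "\<forall>x>0. p x \<le> D * x powr ((z + m) / 2 - 1)"
      using upper by blast
    then show ?thesis
      using tendsto_ratio_powr_zero[of p D "(z + m) / 2" z] nonneg that by (auto simp: S_def)
  qed
  have above: "z \<le> m" if "z \<in> S" for z
    using lower not_tendsto_ratio_powr_if_mass_ge[OF _ _ m, of _ _ z p] that
    by (force simp: S_def not_le)
  have "Sup S = m"
  proof (rule cSup_eq_non_empty)
    show "S \<noteq> {}" using below[of "m - 1"] by auto
  next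
    fix y assume "\<And>z. z \<in> S \<Longrightarrow> z \<le> y"
    then show "m \<le> y" using below[of "(y + m) / 2"] by force
  qed (rule above)
  then show ?thesis unfolding sparsity_shape_def S_def .
qed

lemma sparsity_shape_cong:
  assumes "\<And>x. 0 < x \<Longrightarrow> p x = q x"
  shows "sparsity_shape p = sparsity_shape q"
proof -
  have "((\<lambda>x. p x / x powr (z - 1)) \<longlongrightarrow> \<kappa>) (at_right 0)
      \<longleftrightarrow> ((\<lambda>x. q x / x powr (z - 1)) \<longlongrightarrow> \<kappa>) (at_right 0)" for z \<kappa>
    by (rule tendsto_cong, rule eventually_mono[OF eventually_at_right_less]) (simp add: assms)
  then show ?thesis
    unfolding sparsity_shape_def by simp
qed

lemma sparsity_shape_gamma_density:
  assumes l: "0 < l" shows "sparsity_shape (gamma_density l) = l"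
proof (rule sparsity_shape_eqI[OF l])
  show "\<exists>D. \<forall>x>0. gamma_density l x \<le> D * x powr (s - 1)" if "s < l" for s
    using gamma_density_le_powr[OF l that] by blast
  have "ennreal (exp (- 1) / Gamma l / l * x powr l)
      \<le> (\<integral>\<^sup>+t. ennreal (gamma_density l t) * indicator {0<..x} t \<partial>lborel)" if "0 < x" "x < 1" for x
    using emeasure_gamma_measure_Ioc_ge[OF l, of x] that
    by (simp add: gamma_measure_def emeasure_density)
  moreover have "0 < exp (- 1) / Gamma l / l"
    using l by simp
  ultimately show "\<exists>c>0. \<exists>\<delta>>0. \<forall>x. 0 < x \<longrightarrow> x < \<delta> \<longrightarrow>
      ennreal (c * x powr l) \<le> (\<integral>\<^sup>+t. ennreal (gamma_density l t) * indicator {0<..x} t \<partial>lborel)"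
    using zero_less_one by blast
qed (use l gamma_density_nonneg in auto)

section \<open>Continuous densities\<close>

lemma continuous_density_le_if_interval_mass_le:
  fixes f g :: "real \<Rightarrow> real"
  assumes cf: "continuous_on {0<..} f" and cg: "continuous_on {0<..} g"
    and nf: "\<And>x. 0 < x \<Longrightarrow> 0 \<le> f x" and ng: "\<And>x. 0 < x \<Longrightarrow> 0 \<le> g x"
    and x: "0 < x"
    and mass: "\<And>a b. 0 < a \<Longrightarrow> a < b \<Longrightarrow>
      (\<integral>\<^sup>+t. ennreal (f t) * indicator {a..b} t \<partial>lborel) \<le> (\<integral>\<^sup>+t. ennreal (g t) * indicator {a..b} t \<partial>lborel)"
  shows "f x \<le> g x"
proof (rule ccontr)
  assume "\<not> f x \<le> g x"
  define e where "e = (f x - g x) / 2"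
  have e: "e > 0" using \<open>\<not> f x \<le> g x\<close> by (simp add: e_def)
  have "continuous (at x) (\<lambda>y. f y - g y)"
    using continuous_on_diff[OF cf cg] x by (subst (asm) continuous_on_eq_continuous_at) auto
  then obtain d where d: "d > 0" and dd: "\<And>y. dist y x < d \<Longrightarrow> dist (f y - g y) (f x - g x) < e"
    unfolding continuous_at_eps_delta using e by blast
  define b where "b = x + d / 2"
  have xb: "x < b" using d by (simp add: b_def)
  have sub: "{x..b} \<subseteq> {0<..}" using x by auto
  have gap: "e \<le> f y - g y" if "y \<in> {x..b}" for y
  proof -
    have "\<bar>(f y - g y) - (f x - g x)\<bar> < e"
      using dd[of y] that d by (auto simp: b_def dist_real_def)
    then show ?thesis unfolding abs_less_iff e_def by argo
  qed
  have If: "f integrable_on {x..b}" and Ig: "g integrable_on {x..b}"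
    using continuous_on_subset[OF cf sub] continuous_on_subset[OF cg sub]
    by (auto intro: integrable_continuous_interval)
  have "(\<integral>\<^sup>+t. ennreal (f t) * indicator {x..b} t \<partial>lborel) = ennreal (integral {x..b} f)"
    by (rule nn_integral_has_integral_lebesgue'[OF _ integrable_integral[OF If]]) (use nf x in auto)
  moreover have "(\<integral>\<^sup>+t. ennreal (g t) * indicator {x..b} t \<partial>lborel) = ennreal (integral {x..b} g)"
    by (rule nn_integral_has_integral_lebesgue'[OF _ integrable_integral[OF Ig]]) (use ng x in auto)
  ultimately have "ennreal (integral {x..b} f) \<le> ennreal (integral {x..b} g)"
    using mass[OF x xb] by simp
  moreover have "0 \<le> integral {x..b} g"
    by (rule integral_nonneg[OF Ig]) (use ng x in auto)
  ultimately have "integral {x..b} f \<le> integral {x..b} g"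
    by (subst (asm) ennreal_le_iff) auto
  moreover have "integral {x..b} (\<lambda>y. e) \<le> integral {x..b} (\<lambda>y. f y - g y)"
    by (rule integral_le) (use gap If Ig in \<open>auto intro: integrable_diff\<close>)
  then have "(b - x) * e \<le> integral {x..b} f - integral {x..b} g"
    using xb by (simp add: integral_diff[OF If Ig] content_real)
  moreover have "0 < (b - x) * e" using xb e by simp
  ultimately show False by linarith
qed

lemma (in prob_space) distributed_continuous_density_unique:
  fixes f g :: "real \<Rightarrow> real"
  assumes "distributed M lborel X (\<lambda>x. ennreal (f x))" "distributed M lborel X (\<lambda>x. ennreal (g x))"
    and "continuous_on {0<..} f" "continuous_on {0<..} g"
    and "\<And>x. 0 < x \<Longrightarrow> 0 \<le> f x" "\<And>x. 0 < x \<Longrightarrow> 0 \<le> g x"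
    and "0 < x"
  shows "f x = g x"
proof -
  have mass: "(\<integral>\<^sup>+t. ennreal (f t) * indicator {a..b} t \<partial>lborel)
      = (\<integral>\<^sup>+t. ennreal (g t) * indicator {a..b} t \<partial>lborel)" for a b
    using distributed_emeasure[OF assms(1), of "{a..b}"] distributed_emeasure[OF assms(2), of "{a..b}"]
    by simp
  show ?thesis
  proof (rule antisym)
    show "f x \<le> g x"
      using assms(3-7) by (rule continuous_density_le_if_interval_mass_le) (auto simp: mass)
    show "g x \<le> f x"
      using assms(4,3,6,5,7) by (rule continuous_density_le_if_interval_mass_le) (auto simp: mass)
  qed
qed

section \<open>Sums of independent Gamma variables\<close>

lemma gamma_density_mult_rescaled:
  assumes a: "0 < a" and b: "0 < b" and x: "0 < x"
  shows "gamma_density a (x - x * u) * gamma_density b (x * u)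
    = x powr (a + b - 2) * exp (- x) / (Gamma a * Gamma b)
      * (u powr (b - 1) * (1 - u) powr (a - 1) * indicator {0..1} u)"
proof (cases "0 < u \<and> u < 1")
  case True
  have "x - x * u = x * (1 - u)" by (simp add: algebra_simps)
  then have "gamma_density a (x - x * u)
      = x powr (a - 1) * (1 - u) powr (a - 1) * exp (- (x - x * u)) / Gamma a"
    using True x by (simp add: gamma_density_def powr_mult)
  moreover have "gamma_density b (x * u) = x powr (b - 1) * u powr (b - 1) * exp (- (x * u)) / Gamma b"
    using True x by (simp add: gamma_density_def powr_mult)
  ultimately have "gamma_density a (x - x * u) * gamma_density b (x * u)
      = (x powr (a - 1) * x powr (b - 1)) * exp (- (x - x * u) + - (x * u)) / (Gamma a * Gamma b)
        * (u powr (b - 1) * (1 - u) powr (a - 1))"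
    by (simp add: mult_exp_exp field_simps)
  also have "x powr (a - 1) * x powr (b - 1) = x powr (a + b - 2)"
    using x by (simp add: powr_add[symmetric])
  finally show ?thesis using True by simp
next
  case False
  then consider "u \<le> 0" | "1 \<le> u" by linarith
  then show ?thesis
  proof cases
    case 1
    then have "x * u \<le> 0" using x by (simp add: mult_nonneg_nonpos)
    then show ?thesis using 1 by (cases "u = 0") (auto simp: gamma_density_def)
  next
    case 2
    then have "x - x * u \<le> 0" using x by (simp add: mult_le_cancel_left1)
    then show ?thesis using 2 by (cases "u = 1") (auto simp: gamma_density_def)
  qed
qed

lemma gamma_density_convolution:
  assumes a: "0 < a" and b: "0 < b"
  shows "(\<integral>\<^sup>+y. ennreal (gamma_density a (x - y)) * ennreal (gamma_density b y) \<partial>lborel)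
       = ennreal (gamma_density (a + b) x)"
proof (cases "0 < x")
  case False
  then have "(\<lambda>y. ennreal (gamma_density a (x - y)) * ennreal (gamma_density b y)) = (\<lambda>y. 0)"
    by (auto simp: gamma_density_def)
  then show ?thesis using False by (simp add: gamma_density_def)
next
  case True
  have Ga: "Gamma a > 0" and Gb: "Gamma b > 0" and Gab: "Gamma (a + b) > 0"
    using a b by simp_all
  define C where "C = x powr (a + b - 2) * exp (- x) / (Gamma a * Gamma b)"
  have C0: "C \<ge> 0" using Ga Gb by (simp add: C_def)
  have B0: "0 \<le> Beta b a" using Ga Gb Gab by (simp add: Beta_def add.commute)
  have "(\<integral>\<^sup>+y. ennreal (gamma_density a (x - y)) * ennreal (gamma_density b y) \<partial>lborel)
      = ennreal \<bar>x\<bar> * (\<integral>\<^sup>+u. ennreal (gamma_density a (x - (0 + x * u)))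
          * ennreal (gamma_density b (0 + x * u)) \<partial>lborel)"
    by (rule nn_integral_real_affine) (use True in auto)
  also have "\<dots> = ennreal x * (\<integral>\<^sup>+u. ennreal C * (ennreal (u powr (b - 1) * (1 - u) powr (a - 1))
      * indicator {0..1} u) \<partial>lborel)"
  proof -
    have "ennreal (gamma_density a (x - x * u)) * ennreal (gamma_density b (x * u))
        = ennreal C * (ennreal (u powr (b - 1) * (1 - u) powr (a - 1)) * indicator {0..1} u)" for u
    proof -
      have "ennreal (gamma_density a (x - x * u)) * ennreal (gamma_density b (x * u))
          = ennreal (C * (u powr (b - 1) * (1 - u) powr (a - 1) * indicator {0..1} u))"
        using gamma_density_mult_rescaled[OF a b True, of u] a b
        by (simp add: ennreal_mult'' [symmetric] gamma_density_nonneg C_def)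
      also have "\<dots> = ennreal C * (ennreal (u powr (b - 1) * (1 - u) powr (a - 1)) * indicator {0..1} u)"
        using C0 by (simp add: ennreal_mult indicator_def)
      finally show ?thesis .
    qed
    then show ?thesis using True by simp
  qed
  also have "\<dots> = ennreal x * (ennreal C * (\<integral>\<^sup>+u. ennreal (u powr (b - 1) * (1 - u) powr (a - 1))
      * indicator {0..1} u \<partial>lborel))"
    by (simp add: nn_integral_cmult)
  also have "(\<integral>\<^sup>+u. ennreal (u powr (b - 1) * (1 - u) powr (a - 1)) * indicator {0..1} u \<partial>lborel)
      = ennreal (Beta b a)"
    by (rule nn_integral_has_integral_lebesgue'[OF _ has_integral_Beta_real[OF b a]]) auto
  also have "ennreal x * (ennreal C * ennreal (Beta b a)) = ennreal (x * C * Beta b a)"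
    using True C0 B0 by (simp add: ennreal_mult mult.assoc)
  also have "x * C * Beta b a = gamma_density (a + b) x"
  proof -
    have "x * x powr (a + b - 2) = x powr (a + b - 1)"
      using True by (simp add: powr_add[symmetric] powr_mult_base)
    then show ?thesis using True Ga Gb Gab
      by (simp add: gamma_density_def C_def Beta_def field_simps)
  qed
  finally show ?thesis .
qed

lemma (in prob_space) distributed_sum_gamma:
  assumes "finite I" "I \<noteq> {}" "indep_vars (\<lambda>_. borel) X I"
    "\<And>i. i \<in> I \<Longrightarrow> 0 < l i"
    "\<And>i. i \<in> I \<Longrightarrow> distributed M lborel (X i) (\<lambda>x. ennreal (gamma_density (l i) x))"
  shows "distributed M lborel (\<lambda>\<omega>. \<Sum>i\<in>I. X i \<omega>) (\<lambda>x. ennreal (gamma_density (\<Sum>i\<in>I. l i) x))"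
  using assms
proof (induct I rule: finite_ne_induct)
  case (singleton i) then show ?case by auto
next
  case (insert i I)
  have "distributed M lborel (\<lambda>\<omega>. X i \<omega> + (\<Sum>j\<in>I. X j \<omega>))
     (\<lambda>x. \<integral>\<^sup>+y. ennreal (gamma_density (l i) (x - y)) * ennreal (gamma_density (sum l I) y) \<partial>lborel)"
  proof (rule distributed_convolution)
    show "indep_var borel (X i) borel (\<lambda>\<omega>. \<Sum>j\<in>I. X j \<omega>)"
      using insert by (intro indep_vars_sum) auto
    show "distributed M lborel (\<lambda>\<omega>. \<Sum>j\<in>I. X j \<omega>) (\<lambda>x. ennreal (gamma_density (sum l I) x))"
      using insert by (intro insert.hyps(4)) (auto intro: indep_vars_subset)
  qed (use insert in auto)
  moreover have "0 < sum l I" using insert by (intro sum_pos) auto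
  ultimately show ?case
    using insert gamma_density_convolution[of "l i" "sum l I"] by simp
qed

lemma (in prob_space) sparsity_shape_sum_gamma:
  assumes "finite I" "I \<noteq> {}" "indep_vars (\<lambda>_. borel) X I"
    and l: "\<And>i. i \<in> I \<Longrightarrow> 0 < l i"
    and "\<And>i. i \<in> I \<Longrightarrow> distributed M lborel (X i) (\<lambda>x. ennreal (gamma_density (l i) x))"
    and q: "distributed M lborel (\<lambda>\<omega>. \<Sum>i\<in>I. X i \<omega>) (\<lambda>x. ennreal (q x))"
      "continuous_on {0<..} q" "\<And>x. 0 < x \<Longrightarrow> 0 \<le> q x"
  shows "sparsity_shape q = (\<Sum>i\<in>I. l i)"
proof -
  have L: "0 < (\<Sum>i\<in>I. l i)" using assms(1,2) l by (intro sum_pos) auto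
  have "q x = gamma_density (\<Sum>i\<in>I. l i) x" if "0 < x" for x
    using q(1) distributed_sum_gamma[OF assms(1-5)] q(2) continuous_on_gamma_density
      q(3) gamma_density_nonneg[OF L] that
    by (rule distributed_continuous_density_unique)
  then have "sparsity_shape q = sparsity_shape (gamma_density (\<Sum>i\<in>I. l i))"
    by (rule sparsity_shape_cong)
  also have "\<dots> = (\<Sum>i\<in>I. l i)"
    by (rule sparsity_shape_gamma_density[OF L])
  finally show ?thesis .
qed

section \<open>Products of independent Gamma variables\<close>

lemma (in prob_space) nn_integral_indep_vars_distributed:
  assumes "I \<noteq> {}" "indep_vars (\<lambda>_. borel) X I"
    and X: "\<And>i. i \<in> I \<Longrightarrow> distributed M lborel (X i) (f i)"
    and [measurable]: "g \<in> borel_measurable (PiM I (\<lambda>_. borel))"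
  shows "(\<integral>\<^sup>+\<omega>. g (\<lambda>i\<in>I. X i \<omega>) \<partial>M) = (\<integral>\<^sup>+y. g y \<partial>PiM I (\<lambda>i. density lborel (f i)))"
proof -
  have rv: "random_variable borel (X i)" if "i \<in> I" for i
    using distributed_measurable[OF X[OF that]] by simp
  have "distr M (PiM I (\<lambda>_. borel)) (\<lambda>\<omega>. \<lambda>i\<in>I. X i \<omega>) = PiM I (\<lambda>i. distr M borel (X i))"
    using indep_vars_iff_distr_eq_PiM'[OF assms(1) rv] assms(2) by simp
  also have "\<dots> = PiM I (\<lambda>i. density lborel (f i))"
  proof (rule PiM_cong)
    fix i assume "i \<in> I"
    have "distr M borel (X i) = distr M lborel (X i)"
      by (rule distr_cong) auto
    also have "\<dots> = density lborel (f i)"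
      by (rule distributed_distr_eq_density[OF X[OF \<open>i \<in> I\<close>]])
    finally show "distr M borel (X i) = density lborel (f i)" .
  qed simp
  finally have distr_eq: "distr M (PiM I (\<lambda>_. borel)) (\<lambda>\<omega>. \<lambda>i\<in>I. X i \<omega>) = PiM I (\<lambda>i. density lborel (f i))" .
  have "(\<lambda>\<omega>. \<lambda>i\<in>I. X i \<omega>) \<in> measurable M (PiM I (\<lambda>_. borel))"
    using rv by (intro measurable_restrict) auto
  from nn_integral_distr[OF this, of g, symmetric] show ?thesis
    unfolding distr_eq by simp
qed

lemma (in prob_space) nn_integral_density_prod_indep_gamma:
  assumes "I \<noteq> {}" "indep_vars (\<lambda>_. borel) X I"
    and X: "\<And>i. i \<in> I \<Longrightarrow> distributed M lborel (X i) (\<lambda>x. ennreal (gamma_density (l i) x))"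
    and p: "distributed M lborel (\<lambda>\<omega>. \<Prod>i\<in>I. X i \<omega>) (\<lambda>x. ennreal (p x))"
    and [measurable]: "A \<in> sets borel"
  shows "(\<integral>\<^sup>+t. ennreal (p t) * indicator A t \<partial>lborel)
    = (\<integral>\<^sup>+y. indicator A (\<Prod>i\<in>I. y i) \<partial>PiM I (\<lambda>i. gamma_measure (l i)))"
proof -
  have "(\<integral>\<^sup>+t. ennreal (p t) * indicator A t \<partial>lborel) = (\<integral>\<^sup>+\<omega>. indicator A (\<Prod>i\<in>I. X i \<omega>) \<partial>M)"
    by (rule distributed_nn_integral[OF p]) simp
  also have "\<dots> = (\<integral>\<^sup>+\<omega>. indicator A (\<Prod>i\<in>I. (\<lambda>i\<in>I. X i \<omega>) i) \<partial>M)"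
    by (intro nn_integral_cong arg_cong[where f = "indicator A"] prod.cong) auto
  also have "\<dots> = (\<integral>\<^sup>+y. indicator A (\<Prod>i\<in>I. y i) \<partial>PiM I (\<lambda>i. gamma_measure (l i)))"
    unfolding gamma_measure_def
    by (rule nn_integral_indep_vars_distributed[OF assms(1,2) X]) measurable
  finally show ?thesis .
qed

lemma prod_mem_Ioc:
  fixes y :: "'i \<Rightarrow> real"
  assumes "finite I" "j \<in> I" and y: "\<And>i. i \<in> I \<Longrightarrow> y i \<in> {0<..(if i = j then x else 1)}"
  shows "(\<Prod>i\<in>I. y i) \<in> {0<..x}"
proof -
  have y': "0 < y i \<and> y i \<le> 1" if "i \<in> I - {j}" for i
    using y[of i] that by auto
  have rest: "0 < (\<Prod>i\<in>I - {j}. y i)" "(\<Prod>i\<in>I - {j}. y i) \<le> 1"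
    using y' by (auto intro!: prod_pos) (rule prod_le_1, fastforce)
  have yj: "0 < y j" "y j \<le> x" using y[OF assms(2)] by simp_all
  have "y j * (\<Prod>i\<in>I - {j}. y i) \<le> y j"
    using yj rest by (simp add: mult_le_cancel_left1)
  then have "y j * (\<Prod>i\<in>I - {j}. y i) \<le> x"
    using yj(2) by linarith
  moreover have "0 < y j * (\<Prod>i\<in>I - {j}. y i)"
    using yj rest by simp
  ultimately have "y j * (\<Prod>i\<in>I - {j}. y i) \<in> {0<..x}"
    by simp
  then show ?thesis by (simp only: prod.remove[OF assms(1,2)])
qed

lemma nn_integral_PiM_gamma_indicator_prod_ge:
  fixes l :: "'i \<Rightarrow> real"
  assumes I: "finite I" "j \<in> I" and l: "\<And>i. i \<in> I \<Longrightarrow> 0 < l i" and x: "0 < x" "x \<le> 1"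
  shows "ennreal ((\<Prod>i\<in>I. exp (- 1) / Gamma (l i) / l i) * x powr l j)
    \<le> (\<integral>\<^sup>+y. indicator {0<..x} (\<Prod>i\<in>I. y i) \<partial>PiM I (\<lambda>i. gamma_measure (l i)))"
proof -
  interpret product_sigma_finite "\<lambda>i. gamma_measure (l i)"
    by (simp add: product_sigma_finite_def sigma_finite_gamma_measure)
  define r where "r i = (if i = j then x else 1)" for i
  have r: "0 < r i" "r i \<le> 1" for i using x by (auto simp: r_def)
  have "(\<Prod>i\<in>I. r i powr l i) = x powr l j"
    using prod.remove[OF I, of "\<lambda>i. r i powr l i"] by (simp add: r_def)
  then have "(\<Prod>i\<in>I. exp (- 1) / Gamma (l i) / l i) * x powr l j
      = (\<Prod>i\<in>I. exp (- 1) / Gamma (l i) / l i * r i powr l i)"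
    by (simp only: prod.distrib)
  then have "ennreal ((\<Prod>i\<in>I. exp (- 1) / Gamma (l i) / l i) * x powr l j)
      = (\<Prod>i\<in>I. ennreal (exp (- 1) / Gamma (l i) / l i * r i powr l i))"
    using l by (simp add: prod_ennreal less_imp_le)
  also have "\<dots> \<le> (\<Prod>i\<in>I. emeasure (gamma_measure (l i)) {0<..r i})"
    using l r by (intro prod_mono_ennreal emeasure_gamma_measure_Ioc_ge) auto
  also have "\<dots> = (\<integral>\<^sup>+y. (\<Prod>i\<in>I. indicator {0<..r i} (y i)) \<partial>PiM I (\<lambda>i. gamma_measure (l i)))"
    using I by (subst product_nn_integral_prod) auto
  also have "\<dots> \<le> (\<integral>\<^sup>+y. indicator {0<..x} (\<Prod>i\<in>I. y i) \<partial>PiM I (\<lambda>i. gamma_measure (l i)))"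
  proof (intro nn_integral_mono)
    fix y :: "'i \<Rightarrow> real"
    show "(\<Prod>i\<in>I. indicator {0<..r i} (y i) :: ennreal) \<le> indicator {0<..x} (\<Prod>i\<in>I. y i)"
    proof (cases "\<forall>i\<in>I. y i \<in> {0<..r i}")
      case True
      then have "(\<Prod>i\<in>I. y i) \<in> {0<..x}"
        using prod_mem_Ioc[OF I] by (auto simp: r_def)
      then show ?thesis using True by simp
    next
      case False
      then obtain i where "i \<in> I" "y i \<notin> {0<..r i}" by blast
      then have "(\<Prod>i\<in>I. indicator {0<..r i} (y i) :: ennreal) = 0"
        using I(1) by (intro prod_zero) (auto intro!: bexI[of _ i])
      then show ?thesis by (simp only: zero_le)
    qed
  qed
  finally show ?thesis .
qed

lemma nn_integral_PiM_gamma_indicator_prod_le: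
  fixes l :: "'i \<Rightarrow> real"
  assumes I: "finite I" "j \<in> I" and l: "\<And>i. i \<in> I \<Longrightarrow> 0 < l i" and s: "\<And>i. i \<in> I \<Longrightarrow> s < l i"
    and A: "A \<subseteq> {0<..}" and A_borel [measurable]: "A \<in> sets borel"
  shows "(\<integral>\<^sup>+y. indicator A (\<Prod>i\<in>I. y i) \<partial>PiM I (\<lambda>i. gamma_measure (l i)))
    \<le> ennreal ((l j - s) powr (l j - s) / Gamma (l j) * (\<Prod>i\<in>I - {j}. Gamma (l i - s) / Gamma (l i)))
      * (\<integral>\<^sup>+u. ennreal (u powr (s - 1)) * indicator A u \<partial>lborel)"
proof -
  define N where "N = (\<lambda>i. gamma_measure (l i))"
  interpret product_sigma_finite N
    by (simp add: N_def product_sigma_finite_def sigma_finite_gamma_measure)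
  have sets_N [measurable_cong]: "sets (N i) = sets borel" for i
    by (simp add: N_def)
  define I' where "I' = I - {j}"
  define Cj where "Cj = (l j - s) powr (l j - s) / Gamma (l j)"
  define J where "J = (\<integral>\<^sup>+u. ennreal (u powr (s - 1)) * indicator A u \<partial>lborel)"
  have I': "I = insert j I'" "j \<notin> I'" "finite I'" using I by (auto simp: I'_def)
  have Cj: "0 \<le> Cj" using Gamma_real_pos[OF l[OF I(2)]] by (simp add: Cj_def)
  have moment: "0 \<le> Gamma (l i - s) / Gamma (l i)" if "i \<in> I'" for i
    using that l[of i] s[of i] by (simp add: I'_def less_imp_le)
  have "(\<integral>\<^sup>+y. indicator A (\<Prod>i\<in>I. y i) \<partial>PiM I N)
      = (\<integral>\<^sup>+x. (\<integral>\<^sup>+t. indicator A (\<Prod>i\<in>insert j I'. (x(j := t)) i) \<partial>N j) \<partial>PiM I' N)"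
    unfolding I'(1) by (rule product_nn_integral_insert[OF I'(3,2)]) measurable
  also have "\<dots> = (\<integral>\<^sup>+x. (\<integral>\<^sup>+t. indicator A (t * (\<Prod>i\<in>I'. x i)) \<partial>N j) \<partial>PiM I' N)"
  proof -
    have "(\<Prod>i\<in>I'. (x(j := t)) i) = (\<Prod>i\<in>I'. x i)" for x :: "'i \<Rightarrow> real" and t
      using I'(2) by (intro prod.cong) auto
    then have "(\<Prod>i\<in>insert j I'. (x(j := t)) i) = t * (\<Prod>i\<in>I'. x i)" for x :: "'i \<Rightarrow> real" and t
      using I'(2,3) by simp
    then show ?thesis by simp
  qed
  also have "\<dots> \<le> (\<integral>\<^sup>+x. ennreal Cj * J * (\<Prod>i\<in>I'. ennreal (\<bar>x i\<bar> powr (- s))) \<partial>PiM I' N)"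
  proof (intro nn_integral_mono)
    fix x :: "'i \<Rightarrow> real"
    have prod_eq: "(\<Prod>i\<in>I'. ennreal (\<bar>x i\<bar> powr (- s))) = ennreal (\<bar>\<Prod>i\<in>I'. x i\<bar> powr (- s))"
      by (simp add: prod_ennreal prod_powr_distrib abs_prod)
    show "(\<integral>\<^sup>+t. indicator A (t * (\<Prod>i\<in>I'. x i)) \<partial>N j)
        \<le> ennreal Cj * J * (\<Prod>i\<in>I'. ennreal (\<bar>x i\<bar> powr (- s)))"
      unfolding prod_eq N_def Cj_def J_def
      using nn_integral_gamma_measure_indicator_scaled_le[OF l[OF I(2)] s[OF I(2)] A A_borel, of "\<Prod>i\<in>I'. x i"]
      by (simp only: ac_simps)
  qed
  also have "\<dots> = ennreal Cj * J * (\<integral>\<^sup>+x. (\<Prod>i\<in>I'. ennreal (\<bar>x i\<bar> powr (- s))) \<partial>PiM I' N)"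
    by (rule nn_integral_cmult) measurable
  also have "(\<integral>\<^sup>+x. (\<Prod>i\<in>I'. ennreal (\<bar>x i\<bar> powr (- s))) \<partial>PiM I' N)
      = (\<Prod>i\<in>I'. (\<integral>\<^sup>+y. ennreal (\<bar>y\<bar> powr (- s)) \<partial>N i))"
    by (rule product_nn_integral_prod[OF I'(3)]) measurable
  also have "\<dots> = (\<Prod>i\<in>I'. ennreal (Gamma (l i - s) / Gamma (l i)))"
    using l s by (intro prod.cong refl) (simp add: N_def I'_def nn_integral_gamma_measure_powr)
  also have "\<dots> = ennreal (\<Prod>i\<in>I'. Gamma (l i - s) / Gamma (l i))"
    using moment by (simp add: prod_ennreal)
  also have "ennreal Cj * J * ennreal (\<Prod>i\<in>I'. Gamma (l i - s) / Gamma (l i))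
      = ennreal (Cj * (\<Prod>i\<in>I'. Gamma (l i - s) / Gamma (l i))) * J"
    using Cj moment by (simp add: ennreal_mult prod_nonneg mult_ac)
  finally show ?thesis
    by (simp only: N_def Cj_def J_def I'_def)
qed

lemma density_prod_gamma_le_powr:
  fixes l :: "'i \<Rightarrow> real" and p :: "real \<Rightarrow> real"
  assumes I: "finite I" "I \<noteq> {}" and l: "\<And>i. i \<in> I \<Longrightarrow> 0 < l i" and s: "\<And>i. i \<in> I \<Longrightarrow> s < l i"
    and p: "continuous_on {0<..} p" "\<And>x. 0 < x \<Longrightarrow> 0 \<le> p x"
    and mass: "\<And>A. A \<in> sets borel \<Longrightarrow> (\<integral>\<^sup>+t. ennreal (p t) * indicator A t \<partial>lborel)
      = (\<integral>\<^sup>+y. indicator A (\<Prod>i\<in>I. y i) \<partial>PiM I (\<lambda>i. gamma_measure (l i)))"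
  shows "\<exists>D. \<forall>x>0. p x \<le> D * x powr (s - 1)"
proof -
  obtain j where j: "j \<in> I" using I by blast
  define D where "D = (l j - s) powr (l j - s) / Gamma (l j) * (\<Prod>i\<in>I - {j}. Gamma (l i - s) / Gamma (l i))"
  have D: "0 \<le> D"
    using l s Gamma_real_pos[OF l[OF j]] unfolding D_def
    by (intro mult_nonneg_nonneg prod_nonneg divide_nonneg_pos) (auto intro: less_imp_le)
  have "p x \<le> D * x powr (s - 1)" if x: "0 < x" for x
  proof (rule continuous_density_le_if_interval_mass_le[OF p(1) _ p(2) _ x])
    show "continuous_on {0<..} (\<lambda>x. D * x powr (s - 1))"
      by (intro continuous_intros) auto
    show "0 \<le> D * x powr (s - 1)" for x using D by simp
    fix a b :: real assume ab: "0 < a" "a < b"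
    have "(\<integral>\<^sup>+t. ennreal (p t) * indicator {a..b} t \<partial>lborel)
        = (\<integral>\<^sup>+y. indicator {a..b} (\<Prod>i\<in>I. y i) \<partial>PiM I (\<lambda>i. gamma_measure (l i)))"
      by (rule mass) simp
    also have "\<dots> \<le> ennreal D * (\<integral>\<^sup>+u. ennreal (u powr (s - 1)) * indicator {a..b} u \<partial>lborel)"
      unfolding D_def using ab by (intro nn_integral_PiM_gamma_indicator_prod_le I(1) j l s) auto
    also have "\<dots> = (\<integral>\<^sup>+u. ennreal (D * u powr (s - 1)) * indicator {a..b} u \<partial>lborel)"
      using D by (simp add: nn_integral_cmult[symmetric] ennreal_mult mult.assoc)
    finally show "(\<integral>\<^sup>+t. ennreal (p t) * indicator {a..b} t \<partial>lborel)
        \<le> (\<integral>\<^sup>+u. ennreal (D * u powr (s - 1)) * indicator {a..b} u \<partial>lborel)" .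
  qed
  then show ?thesis by blast
qed

lemma sparsity_shape_prod_gamma:
  fixes l :: "'i \<Rightarrow> real" and p :: "real \<Rightarrow> real"
  assumes I: "finite I" "I \<noteq> {}" and l: "\<And>i. i \<in> I \<Longrightarrow> 0 < l i"
    and p: "continuous_on {0<..} p" "\<And>x. 0 < x \<Longrightarrow> 0 \<le> p x"
    and mass: "\<And>A. A \<in> sets borel \<Longrightarrow> (\<integral>\<^sup>+t. ennreal (p t) * indicator A t \<partial>lborel)
      = (\<integral>\<^sup>+y. indicator A (\<Prod>i\<in>I. y i) \<partial>PiM I (\<lambda>i. gamma_measure (l i)))"
  shows "sparsity_shape p = Min (l ` I)"
proof -
  have "Min (l ` I) \<in> l ` I" using I by (intro Min_in) auto
  then obtain j where j: "j \<in> I" "l j = Min (l ` I)" by (metis imageE)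
  have Min_le: "Min (l ` I) \<le> l i" if "i \<in> I" for i
    using I(1) that by simp
  define c where "c = (\<Prod>i\<in>I. exp (- 1) / Gamma (l i) / l i)"
  have c: "0 < c" unfolding c_def using l by (intro prod_pos) simp
  show ?thesis
  proof (rule sparsity_shape_eqI)
    show "0 < Min (l ` I)" using j l[OF j(1)] by simp
    show "\<exists>D. \<forall>x>0. p x \<le> D * x powr (s - 1)" if "s < Min (l ` I)" for s
      using Min_le that by (intro density_prod_gamma_le_powr[OF I l _ p mass]) (auto intro: less_le_trans)
    have "ennreal (c * x powr Min (l ` I)) \<le> (\<integral>\<^sup>+t. ennreal (p t) * indicator {0<..x} t \<partial>lborel)"
      if "0 < x" "x < 1" for x
    proof -
      have "ennreal (c * x powr Min (l ` I))
          \<le> (\<integral>\<^sup>+y. indicator {0<..x} (\<Prod>i\<in>I. y i) \<partial>PiM I (\<lambda>i. gamma_measure (l i)))"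
        unfolding j(2)[symmetric] c_def
        using that by (intro nn_integral_PiM_gamma_indicator_prod_ge I(1) j(1) l) auto
      also have "\<dots> = (\<integral>\<^sup>+t. ennreal (p t) * indicator {0<..x} t \<partial>lborel)"
        by (rule mass[symmetric]) simp
      finally show ?thesis .
    qed
    then show "\<exists>c>0. \<exists>\<delta>>0. \<forall>x. 0 < x \<longrightarrow> x < \<delta> \<longrightarrow>
        ennreal (c * x powr Min (l ` I)) \<le> (\<integral>\<^sup>+t. ennreal (p t) * indicator {0<..x} t \<partial>lborel)"
      using c zero_less_one by blast
  qed (use p in auto)
qed

theorem theorem1:
  fixes M :: "'a measure" and K :: nat and lam :: "nat \<Rightarrow> real"
    and \<eta> :: "nat \<Rightarrow> 'a \<Rightarrow> real" and p q :: "real \<Rightarrow> real"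
  assumes "prob_space M"
    and "K \<ge> 1"
    and "\<And>i. i \<in> {1..K} \<Longrightarrow> lam i > 0"
    and "prob_space.indep_vars M (\<lambda>_. borel) \<eta> {1..K}"
    and "\<And>i. i \<in> {1..K} \<Longrightarrow>
           distributed M lborel (\<eta> i) (\<lambda>x. ennreal (gamma_density (lam i) x))"
    and "distributed M lborel (\<lambda>\<omega>. \<Prod>i\<in>{1..K}. \<eta> i \<omega>) (\<lambda>x. ennreal (p x))"
    and "continuous_on {0<..} p" and "\<forall>x>0. p x \<ge> 0"
    and "distributed M lborel (\<lambda>\<omega>. \<Sum>i\<in>{1..K}. \<eta> i \<omega>) (\<lambda>x. ennreal (q x))"
    and "continuous_on {0<..} q" and "\<forall>x>0. q x \<ge> 0"
  shows "sparsity_shape p = Min (lam ` {1..K})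
       \<and> sparsity_shape q = (\<Sum>i\<in>{1..K}. lam i)"
proof
  interpret prob_space M by fact
  have I: "finite {1..K}" "{1..K} \<noteq> {}" using assms(2) by auto
  show "sparsity_shape p = Min (lam ` {1..K})"
    using nn_integral_density_prod_indep_gamma[OF I(2) assms(4,5,6)] assms(3,7,8)
    by (intro sparsity_shape_prod_gamma I) auto
  show "sparsity_shape q = (\<Sum>i\<in>{1..K}. lam i)"
    using assms(10,11) by (intro sparsity_shape_sum_gamma[OF I assms(4,3,5,9)]) auto
qed

end
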